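(* Let $\kappa>\frac12$. For every $s\ge0$ and every probability measure $\mu$ on $(-1,1)$, $$\lim_{t\to\infty}\mathbb{P}_{\mu,s}(\tau_X>t)=\mathbb{P}_{\mu,s}(\tau_X=\infty)>0.$$
   Context: Let $\kappa>0$. For $s\ge 0$ and $x\in\mathbb{R}$, let $\mathbb{P}_{x,s}$ be a probability measure under which $(X_t)_{t\ge s}$ is given by $X_t=\frac{x(s+1)^\kappa+W_{t-s}}{(t+1)^\kappa}$, where $(W_u)_{u\ge0}$ is a standard one-dimensional Brownian motion started at $0$ (so $X_t=B_t/(t+1)^\kappa$ with $B_s=x(s+1)^\kappa$). Let $\tau_X:=\inf\{t\ge s:|X_t|=1\}$ (with $\inf\emptyset=\infty$). For a probability measure $\mu$ on $(-1,1)$, $\mathbb{P}_{\mu,s}:=\int\mathbb{P}_{x,s}\,\mu(dx)$. *)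

theory Defs
  imports "HOL-Probability.Probability"
begin

definition std_BM :: "'a measure \<Rightarrow> (real \<Rightarrow> 'a \<Rightarrow> real) \<Rightarrow> bool" where
  "std_BM M W \<longleftrightarrow>
     prob_space M \<and>
     (\<forall>t\<ge>0. W t \<in> borel_measurable M) \<and>
     (\<forall>\<omega>\<in>space M. W 0 \<omega> = 0 \<and> continuous_on {0..} (\<lambda>u. W u \<omega>)) \<and>
     (\<forall>s t. 0 \<le> s \<and> s < t \<longrightarrow>
        distributed M lborel (\<lambda>\<omega>. W t \<omega> - W s \<omega>)
          (\<lambda>x. ennreal (normal_density 0 (sqrt (t - s)) x))) \<and>
     (\<forall>ts :: real list. sorted ts \<and> (\<forall>x\<in>set ts. 0 \<le> x) \<longrightarrow>
        prob_space.indep_vars M (\<lambda>_. borel)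
          (\<lambda>i \<omega>. W (ts ! Suc i) \<omega> - W (ts ! i) \<omega>) {..<length ts - 1})"

definition Xproc :: "real \<Rightarrow> real \<Rightarrow> real \<Rightarrow> (real \<Rightarrow> 'a \<Rightarrow> real) \<Rightarrow> real \<Rightarrow> 'a \<Rightarrow> real" where
  "Xproc \<kappa> s x W t \<omega> = (x * (s + 1) powr \<kappa> + W (t - s) \<omega>) / (t + 1) powr \<kappa>"

definition hit_time :: "real \<Rightarrow> real \<Rightarrow> real \<Rightarrow> (real \<Rightarrow> 'a \<Rightarrow> real) \<Rightarrow> 'a \<Rightarrow> ereal" where
  "hit_time \<kappa> s x W \<omega> =
     (let S = {t. t \<ge> s \<and> \<bar>Xproc \<kappa> s x W t \<omega>\<bar> = 1}
      in if S = {} then \<infinity> else ereal (Inf S))"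

definition Pmix :: "'a measure \<Rightarrow> real measure \<Rightarrow> (real \<Rightarrow> 'a \<Rightarrow> bool) \<Rightarrow> real" where
  "Pmix M \<mu> A = (\<integral>x. measure M {\<omega>\<in>space M. A x \<omega>} \<partial>\<mu>)"

end

theory Submission
  imports Defs
begin

(* Since X_t = (x (s+1)^kappa + W_(t-s)) / (t+1)^kappa, the process never reaches the boundary
   iff |x a + W_u| < (u+s+1)^kappa for all u >= 0, where a = (s+1)^kappa. We exhibit an event of
   positive probability on which this holds: up to a time T the path is steered, block by block,
   from x a to near 0 while staying in a band of width (1-|x|) a / 2, and after T its increments
   over [T, T + 2^(k+1) T] stay below (2^k T)^kappa / 2. A fourth-moment chaining bound controls the
   path between dyadic grid points; for kappa > 1/2 the tail contributions sum to at most 1/2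
   once T is large, and independence of increments makes the initial blocks cost only a positive
   factor. Continuity of the paths reduces both this event and the hitting events to countably
   many time points, which gives measurability; the limit in t then follows from continuity from
   above and dominated convergence in x. *)

section \<open>Dyadic grids\<close>

lemma sum_power_le_geometric:
  fixes q :: real
  assumes "0 \<le> q" "q < 1"
  shows "(\<Sum>k\<le>n. q^k) \<le> 1 / (1 - q)"
proof -
  have "(\<Sum>k\<le>n. q^k) = (1 - q^Suc n) / (1 - q)"
    using sum_gp_strict[of q "Suc n"] assms by (simp add: lessThan_Suc_atMost)
  also have "\<dots> \<le> 1 / (1 - q)"
    using assms by (intro divide_right_mono) auto
  finally show ?thesis .
qed

lemma dyadic_chain_bound:
  fixes w :: "real \<Rightarrow> real" and c :: "nat \<Rightarrow> real"
  assumes "\<And>l i. l \<le> r \<Longrightarrow> i < 2^l \<Longrightarrow>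
     \<bar>w (t + real (Suc i) * L / 2^l) - w (t + real i * L / 2^l)\<bar> \<le> c l"
    and "i \<le> 2^r"
  shows "\<bar>w (t + real i * L / 2^r) - w t\<bar> \<le> (\<Sum>l\<le>r. c l)"
  using assms
proof (induction r arbitrary: i)
  case 0
  have "\<bar>w (t + L) - w t\<bar> \<le> c 0" using "0.prems"(1)[of 0 0] by simp
  then have "0 \<le> c 0" by (meson abs_ge_zero order_trans)
  moreover have "i = 0 \<or> i = 1" using "0.prems"(2) by auto
  ultimately show ?case using "0.prems"(1)[of 0 0] by auto
next
  case (Suc r)
  have IH: "\<And>j. j \<le> 2^r \<Longrightarrow> \<bar>w (t + real j * L / 2^r) - w t\<bar> \<le> (\<Sum>l\<le>r. c l)"
    using Suc.IH Suc.prems(1) by (meson le_Suc_eq)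
  have "\<bar>w (t + 1 * L / 2^Suc r) - w (t + 0 * L / 2^Suc r)\<bar> \<le> c (Suc r)"
    using Suc.prems(1)[of "Suc r" 0] by simp
  then have c_nonneg: "0 \<le> c (Suc r)" by (meson abs_ge_zero order_trans)
  have half: "t + real (2 * j) * L / 2 ^ Suc r = t + real j * L / 2^r" for j
    by (simp add: field_simps)
  show ?case
  proof (cases "even i")
    case True
    then obtain j where j: "i = 2 * j" by blast
    with Suc.prems(2) have "j \<le> 2^r" by simp
    then show ?thesis using IH[of j] c_nonneg half[of j] j by simp
  next
    case False
    then obtain j where j: "i = 2 * j + 1" using oddE by blast
    with Suc.prems(2) have "j < 2^r" by simp
    then have "\<bar>w (t + real (Suc (2*j)) * L / 2^Suc r) - w (t + real j * L / 2^r)\<bar> \<le> c (Suc r)"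
      and "\<bar>w (t + real j * L / 2^r) - w t\<bar> \<le> (\<Sum>l\<le>r. c l)"
      using Suc.prems(1)[of "Suc r" "2*j"] IH[of j] half[of j] by simp_all
    then show ?thesis using j by simp
  qed
qed

lemma dyadic_approx_from_below:
  fixes a b u :: real
  assumes ab: "a < b" and u: "u \<in> {a..b}"
  obtains k :: "nat \<Rightarrow> nat"
  where "\<And>m. k m \<le> 2^m" "\<And>m. a + real (k m) * (b - a) / 2^m \<in> {a..b}"
    and "(\<lambda>m. a + real (k m) * (b - a) / 2^m) \<longlonglongrightarrow> u"
proof
  define y where "y m = (u - a) * 2^m / (b - a)" for m :: nat
  define p where "p m = a + real (nat \<lfloor>y m\<rfloor>) * (b - a) / 2^m" for m :: nat
  have y_nonneg: "0 \<le> y m" for m using u ab by (auto simp: y_def)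
  have floor_y: "real (nat \<lfloor>y m\<rfloor>) = of_int \<lfloor>y m\<rfloor>" for m using y_nonneg[of m] by simp
  have y_le: "y m \<le> 2^m" for m using u ab by (auto simp: y_def field_simps)
  have "real (nat \<lfloor>y m\<rfloor>) \<le> 2^m" for m
    using floor_y[of m] of_int_floor_le[of "y m"] y_le[of m] by linarith
  then show "nat \<lfloor>y m\<rfloor> \<le> 2^m" for m by (metis of_nat_le_iff of_nat_numeral of_nat_power)
  have p_le: "p m \<le> u" for m
  proof -
    have "real (nat \<lfloor>y m\<rfloor>) * (b - a) / 2^m \<le> y m * (b - a) / 2^m"
      using floor_y[of m] ab by (intro divide_right_mono mult_right_mono) auto
    also have "\<dots> = u - a" using ab by (simp add: y_def)
    finally show ?thesis by (simp add: p_def)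
  qed
  have p_ge: "u - (b - a) / 2^m \<le> p m" for m
  proof -
    have "(y m - 1) * (b - a) / 2^m \<le> real (nat \<lfloor>y m\<rfloor>) * (b - a) / 2^m"
      using floor_y[of m] ab by (intro divide_right_mono mult_right_mono) auto
    moreover have "(y m - 1) * (b - a) / 2^m = u - a - (b - a) / 2^m"
      using ab by (simp add: y_def field_simps)
    ultimately show ?thesis by (simp add: p_def)
  qed
  show "p m \<in> {a..b}" for m
    using p_le[of m] u ab by (auto simp: p_def)
  have "(\<lambda>m. (b - a) / 2^m) \<longlonglongrightarrow> 0" by (rule LIMSEQ_divide_realpow_zero) simp
  from tendsto_diff[OF tendsto_const this] have "(\<lambda>m. u - (b - a) / 2^m) \<longlonglongrightarrow> u"
    by simp
  then show "p \<longlonglongrightarrow> u"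
    using p_ge p_le by (auto intro: tendsto_sandwich[where f="\<lambda>m. u - (b - a) / 2^m" and h="\<lambda>m. u"])
qed

lemma continuous_on_dyadic_nonpos:
  fixes g :: "real \<Rightarrow> real"
  assumes ab: "a \<le> b" and cont: "continuous_on {a..b} g"
    and grid: "\<And>m i. m \<ge> level \<Longrightarrow> i \<le> 2^m \<Longrightarrow> g (a + real i * (b - a) / 2^m) \<le> 0"
    and u: "u \<in> {a..b}"
  shows "g u \<le> 0"
proof (cases "a = b")
  case True
  then have "u = a" using u by auto
  then show ?thesis using grid[of level 0] by simp
next
  case False
  with ab have "a < b" by simp
  then obtain k where k: "\<And>m. k m \<le> 2^m" "\<And>m. a + real (k m) * (b - a) / 2^m \<in> {a..b}"
    and lim: "(\<lambda>m. a + real (k m) * (b - a) / 2^m) \<longlonglongrightarrow> u"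
    using dyadic_approx_from_below[OF _ u] by blast
  have "(\<lambda>m. g (a + real (k m) * (b - a) / 2^m)) \<longlonglongrightarrow> g u"
    by (rule continuous_on_tendsto_compose[OF cont lim u]) (use k in auto)
  moreover have "\<forall>m\<ge>level. g (a + real (k m) * (b - a) / 2^m) \<le> 0"
    using grid k by blast
  ultimately show ?thesis using LIMSEQ_le_const2 by blast
qed

lemma continuous_on_pos_iff_dyadic:
  fixes G :: "real \<Rightarrow> real"
  assumes ab: "a \<le> b" and cont: "continuous_on {a..b} G"
  shows "(\<forall>u\<in>{a..b}. 0 < G u) \<longleftrightarrow>
    (\<exists>k::nat. \<forall>r i::nat. i \<le> 2^r \<longrightarrow> 1 / (real k + 1) \<le> G (a + real i * (b - a) / 2^r))"
proof
  assume pos: "\<forall>u\<in>{a..b}. 0 < G u"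
  obtain u0 where u0: "u0 \<in> {a..b}" "\<And>y. y \<in> {a..b} \<Longrightarrow> G u0 \<le> G y"
    using continuous_attains_inf[OF compact_Icc _ cont] ab by auto
  have "0 < G u0" using pos u0(1) by blast
  then obtain k :: nat where "inverse (real (Suc k)) < G u0" using reals_Archimedean by blast
  then have k: "1 / (real k + 1) < G u0" by (simp add: inverse_eq_divide add.commute)
  have grid_in: "a + real i * (b - a) / 2^r \<in> {a..b}" if "i \<le> 2^r" for i r :: nat
  proof -
    have "real i \<le> 2^r" using that by (metis of_nat_le_iff of_nat_numeral of_nat_power)
    then have "real i * (b - a) \<le> 2^r * (b - a)" using ab by (intro mult_right_mono) auto
    then have "real i * (b - a) / 2^r \<le> b - a" by (simp add: pos_divide_le_eq mult.commute)
    moreover have "0 \<le> real i * (b - a) / 2^r" using ab by simp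
    ultimately show ?thesis by simp
  qed
  have "1 / (real k + 1) \<le> G (a + real i * (b - a) / 2^r)" if "i \<le> 2^r" for r i :: nat
    using k u0(2)[OF grid_in[OF that]] by simp
  then show "\<exists>k::nat. \<forall>r i::nat. i \<le> 2^r \<longrightarrow> 1 / (real k + 1) \<le> G (a + real i * (b - a) / 2^r)"
    by blast
next
  assume "\<exists>k::nat. \<forall>r i::nat. i \<le> 2^r \<longrightarrow> 1 / (real k + 1) \<le> G (a + real i * (b - a) / 2^r)"
  then obtain k :: nat where k: "\<And>r i. i \<le> (2::nat)^r \<Longrightarrow> 1 / (real k + 1) \<le> G (a + real i * (b - a) / 2^r)"
    by blast
  have cont': "continuous_on {a..b} (\<lambda>v. 1 / (real k + 1) - G v)"
    using cont by (intro continuous_intros)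
  show "\<forall>u\<in>{a..b}. 0 < G u"
  proof
    fix u assume u: "u \<in> {a..b}"
    have "(\<lambda>v. 1 / (real k + 1) - G v) u \<le> 0"
    proof (rule continuous_on_dyadic_nonpos[OF ab cont' _ u, where level=0])
      fix m i :: nat assume "0 \<le> m" "i \<le> 2^m"
      then show "(\<lambda>v. 1 / (real k + 1) - G v) (a + real i * (b - a) / 2^m) \<le> 0"
        using k[of i m] by simp
    qed
    then have "1 / (real k + 1) \<le> G u" by simp
    moreover have "0 < 1 / (real k + 1)" by simp
    ultimately show "0 < G u" by linarith
  qed
qed

lemma dyadic_grid_Suc:
  assumes "\<forall>i\<le>(2::nat)^Suc r. P (real i * L / 2^Suc r)"
  shows "\<forall>i\<le>(2::nat)^r. P (real i * L / 2^r)"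
proof (intro allI impI)
  fix i :: nat assume "i \<le> 2^r"
  then have "2*i \<le> 2^Suc r" by simp
  with assms have "P (real (2*i) * L / 2^Suc r)" by blast
  moreover have "real (2*i) * L / 2^Suc r = real i * L / 2^r" by simp
  ultimately show "P (real i * L / 2^r)" by simp
qed

lemma dyadic_window_exists:
  fixes T u :: real
  assumes T: "0 < T" and u: "T \<le> u"
  obtains k :: nat where "u - T \<le> 2^(k+1) * T" "2^k * T \<le> u"
proof -
  define k where "k = (LEAST k. u - T \<le> 2^(k+1) * T)"
  obtain k0 :: nat where "(u - T) / T < 2^k0" using real_arch_pow[of 2 "(u - T) / T"] by auto
  then have "u - T < 2^k0 * T" using T by (simp add: field_simps)
  also have "\<dots> \<le> 2^(k0+1) * T" using T by simp
  finally have "u - T \<le> 2^(k0+1) * T" by simp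
  then have upper: "u - T \<le> 2^(k+1) * T" unfolding k_def by (rule LeastI)
  have "2^k * T \<le> u"
  proof (cases k)
    case (Suc k')
    then have "\<not> u - T \<le> 2^(k'+1) * T" unfolding k_def by (metis lessI not_less_Least)
    then show ?thesis using Suc T by simp
  qed (use u in simp)
  with upper show thesis by (rule that)
qed

lemma chaining_term_eq:
  fixes L l :: real
  assumes l: "0 < l"
  shows "3 * (L * (1/2)^k)^2 / (l / 10 * (9/10)^k)^4 = 30000 * L^2 / l^4 * (2500/6561)^k"
proof -
  have swap: "(x^k)^j = (x^j)^k" for x :: real and j by (metis power_mult mult.commute)
  have num: "(L * (1/2)^k)^2 = L^2 * (1/4::real)^k"
    by (simp only: power_mult_distrib swap) (simp add: power_divide)
  have den: "(l / 10 * (9/10)^k)^4 = l^4 / 10000 * (6561/10000::real)^k"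
    by (simp only: power_mult_distrib swap) (simp add: power_divide)
  have ratio: "3 * (L^2 * A) / (l^4 / 10000 * B) = 30000 * L^2 / l^4 * (A / B)" for A B :: real
    using l by (simp add: field_simps)
  have "(1/4::real)^k / (6561/10000)^k = (2500/6561)^k"
    by (simp flip: power_divide)
  then show ?thesis unfolding num den ratio by simp
qed

section \<open>Increments of Brownian motion\<close>

lemma has_bochner_integral_normal_fourth_moment:
  assumes "0 < \<sigma>"
  shows "has_bochner_integral lborel (\<lambda>x. normal_density 0 \<sigma> x * x^4) (3 * \<sigma>^4)"
proof -
  have "has_bochner_integral lborel (\<lambda>x. normal_density 0 \<sigma> x * (x - 0)^(2*2)) (fact (2 * 2) / ((2 / \<sigma>\<^sup>2)^2 * fact 2))"
    by (rule normal_moment_even) (use assms in simp)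
  moreover have "fact (2 * 2) / ((2 / \<sigma>\<^sup>2)^2 * fact 2) = (3 * \<sigma>^4 :: real)"
    using assms by (simp add: fact_numeral power2_eq_square field_simps power4_eq_xxxx)
  ultimately show ?thesis by simp
qed

lemma borel_measurable_PiM_component [measurable]:
  "(\<lambda>f. f i) \<in> borel_measurable (PiM I (\<lambda>_. borel :: real measure))"
proof (cases "i \<in> I")
  case True
  then show ?thesis by (rule measurable_component_singleton)
next
  case False
  then have "(\<lambda>f. f i) \<in> borel_measurable (PiM I (\<lambda>_. borel :: real measure))
      \<longleftrightarrow> (\<lambda>f. undefined :: real) \<in> borel_measurable (PiM I (\<lambda>_. borel :: real measure))"
    by (intro measurable_cong) (auto simp: space_PiM PiE_def extensional_def)
  then show ?thesis by simp
qed

locale brownian_motion =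
  fixes M :: "'a measure" and W :: "real \<Rightarrow> 'a \<Rightarrow> real"
  assumes std_BM: "std_BM M W"
begin

sublocale prob_space M using std_BM by (simp add: std_BM_def)

lemma borel_measurable_W [measurable (raw)]: "0 \<le> t \<Longrightarrow> W t \<in> borel_measurable M"
  using std_BM by (simp add: std_BM_def)

lemma W_0: "\<omega> \<in> space M \<Longrightarrow> W 0 \<omega> = 0"
  using std_BM by (simp add: std_BM_def)

lemma continuous_on_W: "\<omega> \<in> space M \<Longrightarrow> continuous_on {0..} (\<lambda>u. W u \<omega>)"
  using std_BM by (simp add: std_BM_def)

lemma distributed_increment: "0 \<le> s \<Longrightarrow> s < t \<Longrightarrow>
    distributed M lborel (\<lambda>\<omega>. W t \<omega> - W s \<omega>) (\<lambda>x. ennreal (normal_density 0 (sqrt (t - s)) x))"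
  using std_BM by (simp add: std_BM_def)

lemma indep_increments: "sorted ts \<Longrightarrow> (\<forall>x\<in>set ts. 0 \<le> x) \<Longrightarrow>
    indep_vars (\<lambda>_. borel) (\<lambda>i \<omega>. W (ts ! Suc i) \<omega> - W (ts ! i) \<omega>) {..<length ts - 1}"
  using std_BM by (simp add: std_BM_def)

lemma prob_increment_gt_le:
  assumes s: "0 \<le> s" "s \<le> t" and l: "0 < l"
  shows "prob {\<omega>\<in>space M. l < \<bar>W t \<omega> - W s \<omega>\<bar>} \<le> 3 * (t - s)^2 / l^4"
proof (cases "s = t")
  case True then show ?thesis using l by (simp add: not_less)
next
  case False
  then have st: "s < t" using s by simp
  define \<sigma> where "\<sigma> = sqrt (t - s)"
  have \<sigma>: "0 < \<sigma>" "\<sigma>^2 = t - s" using st by (auto simp: \<sigma>_def)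
  define X where "X = (\<lambda>\<omega>. W t \<omega> - W s \<omega>)"
  have D: "distributed M lborel X (\<lambda>x. ennreal (normal_density 0 \<sigma> x))"
    unfolding X_def \<sigma>_def using distributed_increment s st by simp
  define A where "A = {x::real. l < \<bar>x\<bar>}"
  have A: "A \<in> sets lborel" unfolding A_def by measurable
  have "emeasure M (X -` A \<inter> space M) = (\<integral>\<^sup>+x. ennreal (normal_density 0 \<sigma> x) * indicator A x \<partial>lborel)"
    by (rule distributed_emeasure[OF D A])
  also have "\<dots> \<le> (\<integral>\<^sup>+x. ennreal (normal_density 0 \<sigma> x * x^4 / l^4) \<partial>lborel)"
  proof (intro nn_integral_mono)
    fix x
    show "ennreal (normal_density 0 \<sigma> x) * indicator A x \<le> ennreal (normal_density 0 \<sigma> x * x^4 / l^4)"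
    proof (cases "x \<in> A")
      case True
      then have "l^4 \<le> \<bar>x\<bar>^4" using l by (intro power_mono) (auto simp: A_def)
      then have "1 \<le> x^4 / l^4" using l by (simp add: power_abs)
      then have "normal_density 0 \<sigma> x * 1 \<le> normal_density 0 \<sigma> x * (x^4 / l^4)"
        by (intro mult_left_mono) auto
      then show ?thesis using True by (simp add: ennreal_leI)
    qed simp
  qed
  also have "\<dots> = ennreal (3 * \<sigma>^4 / l^4)"
    using has_bochner_integral_divide_zero[OF has_bochner_integral_normal_fourth_moment[OF \<sigma>(1)], of "l^4"]
    by (subst nn_integral_eq_integral) (auto simp: has_bochner_integral_iff)
  finally have "prob (X -` A \<inter> space M) \<le> 3 * \<sigma>^4 / l^4"
    using l by (simp add: emeasure_eq_measure ennreal_le_iff)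
  moreover have "\<sigma>^4 = (t - s)^2" using \<sigma>(2) by (metis power_mult numeral_times_numeral semiring_norm(12,13))
  moreover have "X -` A \<inter> space M = {\<omega>\<in>space M. l < \<bar>W t \<omega> - W s \<omega>\<bar>}"
    by (auto simp: X_def A_def)
  ultimately show ?thesis by simp
qed

lemma prob_increment_near_ge:
  assumes s: "0 \<le> s" "s < t" and e: "0 < e"
  shows "2 * e * (1 / sqrt (2 * pi * (t - s)) * exp (- ((\<bar>d\<bar> + e)^2) / (2 * (t - s))))
      \<le> prob {\<omega>\<in>space M. \<bar>W t \<omega> - W s \<omega> - d\<bar> \<le> e}"
proof -
  define \<sigma> where "\<sigma> = sqrt (t - s)"
  have \<sigma>: "0 < \<sigma>" "\<sigma>^2 = t - s" using s by (auto simp: \<sigma>_def)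
  define X where "X = (\<lambda>\<omega>. W t \<omega> - W s \<omega>)"
  have D: "distributed M lborel X (\<lambda>x. ennreal (normal_density 0 \<sigma> x))"
    unfolding X_def \<sigma>_def using distributed_increment s by simp
  define A where "A = {d - e .. d + e}"
  have A: "A \<in> sets lborel" unfolding A_def by measurable
  define c where "c = 1 / sqrt (2 * pi * (t - s)) * exp (- ((\<bar>d\<bar> + e)^2) / (2 * (t - s)))"
  have c_nonneg: "0 \<le> c" unfolding c_def using s by simp
  have "ennreal (c * (2 * e)) = (\<integral>\<^sup>+x. ennreal c * indicator A x \<partial>lborel)"
    using A e c_nonneg by (simp add: nn_integral_cmult_indicator A_def ennreal_mult)
  also have "\<dots> \<le> (\<integral>\<^sup>+x. ennreal (normal_density 0 \<sigma> x) * indicator A x \<partial>lborel)"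
  proof (intro nn_integral_mono)
    fix x
    show "ennreal c * indicator A x \<le> ennreal (normal_density 0 \<sigma> x) * indicator A x"
    proof (cases "x \<in> A")
      case True
      then have "\<bar>x\<bar> \<le> \<bar>d\<bar> + e" by (auto simp: A_def)
      then have "x^2 \<le> (\<bar>d\<bar> + e)^2" by (metis abs_ge_zero power2_abs power_mono)
      then have "- ((\<bar>d\<bar> + e)^2) / (2 * (t - s)) \<le> - (x^2) / (2 * (t - s))"
        using s by (intro divide_right_mono) auto
      then have "c \<le> normal_density 0 \<sigma> x"
        unfolding c_def normal_density_def \<sigma>(2) using s by (intro mult_left_mono) auto
      then show ?thesis using True by (simp add: ennreal_leI)
    qed simp
  qed
  also have "\<dots> = emeasure M (X -` A \<inter> space M)"
    by (rule distributed_emeasure[OF D A, symmetric])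
  finally have "c * (2 * e) \<le> prob (X -` A \<inter> space M)"
    by (simp add: emeasure_eq_measure ennreal_le_iff)
  moreover have "X -` A \<inter> space M = {\<omega>\<in>space M. \<bar>W t \<omega> - W s \<omega> - d\<bar> \<le> e}"
    by (auto simp: X_def A_def)
  ultimately show ?thesis by (simp add: c_def mult_ac)
qed

lemma dyadic_max_increment_subset:
  assumes "(\<Sum>k\<le>r. c k) \<le> l"
  shows "{\<omega>\<in>space M. \<exists>i\<le>2^r. l < \<bar>W (t + real i * L / 2^r) \<omega> - W t \<omega>\<bar>}
    \<subseteq> (\<Union>k\<le>r. \<Union>i<2^k. {\<omega>\<in>space M. c k < \<bar>W (t + real (Suc i) * L / 2^k) \<omega> - W (t + real i * L / 2^k) \<omega>\<bar>})"
proof safe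
  fix \<omega> i assume \<omega>: "\<omega> \<in> space M" and i: "i \<le> 2^r" "l < \<bar>W (t + real i * L / 2^r) \<omega> - W t \<omega>\<bar>"
  show "\<omega> \<in> (\<Union>k\<le>r. \<Union>i<2^k. {\<omega>\<in>space M. c k < \<bar>W (t + real (Suc i) * L / 2^k) \<omega> - W (t + real i * L / 2^k) \<omega>\<bar>})"
  proof (rule ccontr)
    assume "\<omega> \<notin> (\<Union>k\<le>r. \<Union>i<2^k. {\<omega>\<in>space M. c k < \<bar>W (t + real (Suc i) * L / 2^k) \<omega> - W (t + real i * L / 2^k) \<omega>\<bar>})"
    then have "\<bar>W (t + real i * L / 2^r) \<omega> - W t \<omega>\<bar> \<le> (\<Sum>k\<le>r. c k)"
      using \<omega> by (intro dyadic_chain_bound[OF _ i(1)]) (auto simp: not_less)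
    then show False using i(2) assms by linarith
  qed
qed

lemma prob_dyadic_level_increment_gt_le:
  assumes t: "0 \<le> t" and L: "0 < L" and l: "0 < l"
  shows "prob {\<omega>\<in>space M. l / 10 * (9/10)^k < \<bar>W (t + real (Suc i) * L / 2^k) \<omega> - W (t + real i * L / 2^k) \<omega>\<bar>}
    \<le> 30000 * L^2 / l^4 * (2500/6561)^k"
proof -
  have diff: "(t + real (Suc i) * L / 2^k) - (t + real i * L / 2^k) = L * (1/2)^k"
    by (simp add: field_simps)
  have "0 < l / 10 * (9/10::real)^k" using l by simp
  then have "prob {\<omega>\<in>space M. l / 10 * (9/10)^k < \<bar>W (t + real (Suc i) * L / 2^k) \<omega> - W (t + real i * L / 2^k) \<omega>\<bar>}
      \<le> 3 * ((t + real (Suc i) * L / 2^k) - (t + real i * L / 2^k))^2 / (l / 10 * (9/10)^k)^4"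
    using t L by (intro prob_increment_gt_le) (auto simp: field_simps)
  also have "\<dots> = 30000 * L^2 / l^4 * (2500/6561)^k"
    unfolding diff using l by (rule chaining_term_eq)
  finally show ?thesis .
qed

lemma prob_dyadic_max_increment_gt_le:
  assumes t: "0 \<le> t" and L: "0 < L" and l: "0 < l"
  shows "prob {\<omega>\<in>space M. \<exists>i\<le>2^r. l < \<bar>W (t + real i * L / 2^r) \<omega> - W t \<omega>\<bar>} \<le> 150000 * L^2 / l^4"
proof -
  text \<open>Chaining: level \<open>k\<close> of the dyadic grid gets the threshold \<open>c k\<close>; these sum to at
    most \<open>l\<close>, while the level-\<open>k\<close> failure probabilities decay like \<open>(5000/6561)^k\<close>.\<close>
  define c where "c k = l / 10 * (9/10)^k" for k :: nat
  define B where "B k i = {\<omega>\<in>space M. c k < \<bar>W (t + real (Suc i) * L / 2^k) \<omega> - W (t + real i * L / 2^k) \<omega>\<bar>}"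
    for k i :: nat
  have B_events: "B k i \<in> events" for k i
    unfolding B_def using t L by - measurable
  have "(\<Sum>k\<le>r. (9/10::real)^k) \<le> 10"
    using sum_power_le_geometric[of "9/10::real" r] by simp
  then have "l / 10 * (\<Sum>k\<le>r. (9/10::real)^k) \<le> l / 10 * 10"
    using l by (intro mult_left_mono) simp_all
  then have "{\<omega>\<in>space M. \<exists>i\<le>2^r. l < \<bar>W (t + real i * L / 2^r) \<omega> - W t \<omega>\<bar>} \<subseteq> (\<Union>k\<le>r. \<Union>i<2^k. B k i)"
    unfolding B_def by (intro dyadic_max_increment_subset) (simp add: c_def sum_distrib_left)
  then have "prob {\<omega>\<in>space M. \<exists>i\<le>2^r. l < \<bar>W (t + real i * L / 2^r) \<omega> - W t \<omega>\<bar>}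
      \<le> prob (\<Union>k\<le>r. \<Union>i<2^k. B k i)"
    using B_events by (intro finite_measure_mono) auto
  also have "\<dots> \<le> (\<Sum>k\<le>r. prob (\<Union>i<2^k. B k i))"
    using B_events by (intro finite_measure_subadditive_finite) auto
  also have "\<dots> \<le> (\<Sum>k\<le>r. \<Sum>i<2^k. prob (B k i))"
    using B_events by (intro sum_mono finite_measure_subadditive_finite) auto
  also have "\<dots> \<le> (\<Sum>k\<le>r. \<Sum>i<(2::nat)^k. 30000 * L^2 / l^4 * (2500/6561)^k)"
    unfolding B_def c_def using t L l by (intro sum_mono prob_dyadic_level_increment_gt_le)
  also have "\<dots> = 30000 * L^2 / l^4 * (\<Sum>k\<le>r. (5000/6561::real)^k)"
  proof -
    have level_sum: "(\<Sum>i<(2::nat)^k. 30000 * L^2 / l^4 * (2500/6561::real)^k) = 30000 * L^2 / l^4 * (5000/6561)^k"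
      for k :: nat
    proof -
      have "(2::real)^k * (2500/6561)^k = (5000/6561)^k" by (simp flip: power_mult_distrib)
      then show ?thesis by (simp add: mult.left_commute[of "2^k"])
    qed
    show ?thesis unfolding level_sum sum_distrib_left ..
  qed
  also have "\<dots> \<le> 30000 * L^2 / l^4 * 5"
  proof (rule mult_left_mono)
    show "(\<Sum>k\<le>r. (5000/6561::real)^k) \<le> 5"
      using sum_power_le_geometric[of "5000/6561::real" r] by simp
  qed (use l in simp)
  finally show ?thesis by simp
qed

lemma prob_dyadic_block_ge:
  assumes t: "0 \<le> t" and L: "0 < L" and l: "0 < l" and e: "0 < e"
  shows "2 * e * (1 / sqrt (2 * pi * L) * exp (- ((\<bar>d\<bar> + e)^2) / (2 * L))) - 150000 * L^2 / l^4
    \<le> prob {\<omega>\<in>space M. (\<forall>i\<le>2^r. \<bar>W (t + real i * L / 2^r) \<omega> - W t \<omega>\<bar> \<le> l)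
                         \<and> \<bar>W (t + L) \<omega> - W t \<omega> - d\<bar> \<le> e}"
    (is "_ \<le> prob ?S")
proof -
  let ?A = "{\<omega>\<in>space M. \<exists>i\<le>2^r. l < \<bar>W (t + real i * L / 2^r) \<omega> - W t \<omega>\<bar>}"
  let ?B = "{\<omega>\<in>space M. \<bar>W (t + L) \<omega> - W t \<omega> - d\<bar> \<le> e}"
  have A: "?A \<in> events" using t L by - measurable
  have B: "?B \<in> events" using t L by - measurable
  have S_eq: "?S = ?B - ?A" by (auto simp: not_less)
  have S: "?S \<in> events" unfolding S_eq using B A by (rule sets.Diff)
  have "?B \<subseteq> ?S \<union> ?A" unfolding S_eq Un_Diff_cancel2 by (rule Un_upper1)
  then have "prob ?B \<le> prob (?S \<union> ?A)"
    by (rule finite_measure_mono[OF _ sets.Un[OF S A]])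
  also have "\<dots> \<le> prob ?S + prob ?A"
    using S A by (rule measure_Un_le)
  finally have "prob ?B \<le> prob ?S + prob ?A" .
  moreover have "prob ?A \<le> 150000 * L^2 / l^4"
    using prob_dyadic_max_increment_gt_le[OF t L l] .
  moreover have "2 * e * (1 / sqrt (2 * pi * L) * exp (- ((\<bar>d\<bar> + e)^2) / (2 * L))) \<le> prob ?B"
    using prob_increment_near_ge[OF t _ e, of "t + L" d] L by simp
  ultimately show ?thesis by linarith
qed

lemma indep_increment_blocks:
  fixes h :: real and N :: nat and K :: "nat \<Rightarrow> nat set" and J :: "nat set"
    and P :: "nat \<Rightarrow> (nat \<Rightarrow> real) \<Rightarrow> bool"
  assumes h: "0 \<le> h" and J: "finite J" "J \<noteq> {}" and K: "\<And>j. j \<in> J \<Longrightarrow> K j \<subseteq> {..<N}"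
    and disj: "disjoint_family_on K J"
    and P: "\<And>j. j \<in> J \<Longrightarrow> {f \<in> space (PiM (K j) (\<lambda>_. borel)). P j f} \<in> sets (PiM (K j) (\<lambda>_. borel))"
  shows "prob (\<Inter>j\<in>J. {\<omega>\<in>space M. P j (\<lambda>l\<in>K j. W (real (Suc l) * h) \<omega> - W (real l * h) \<omega>)})
       = (\<Prod>j\<in>J. prob {\<omega>\<in>space M. P j (\<lambda>l\<in>K j. W (real (Suc l) * h) \<omega> - W (real l * h) \<omega>)})"
proof -
  define ts where "ts = map (\<lambda>i. real i * h) [0..<Suc N]"
  define Y where "Y l \<omega> = W (real (Suc l) * h) \<omega> - W (real l * h) \<omega>" for l \<omega>
  have "sorted ts" unfolding ts_def using h
    by (auto simp: sorted_iff_nth_mono simp del: upt_Suc intro!: mult_right_mono)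
  moreover have "\<forall>x\<in>set ts. 0 \<le> x" unfolding ts_def using h by auto
  ultimately have "indep_vars (\<lambda>_. borel) (\<lambda>i \<omega>. W (ts ! Suc i) \<omega> - W (ts ! i) \<omega>) {..<length ts - 1}"
    by (rule indep_increments)
  moreover have "indep_vars (\<lambda>_. borel) (\<lambda>i \<omega>. W (ts ! Suc i) \<omega> - W (ts ! i) \<omega>) {..<length ts - 1}
      \<longleftrightarrow> indep_vars (\<lambda>_. borel) Y {..<N}"
    by (intro indep_vars_cong) (auto simp: ts_def Y_def nth_append simp del: upt_Suc)
  ultimately have "indep_vars (\<lambda>_. borel) Y {..<N}" by simp
  then have indep: "indep_vars (\<lambda>j. PiM (K j) (\<lambda>_. borel)) (\<lambda>j \<omega>. restrict (\<lambda>i. Y i \<omega>) (K j)) J"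
    by (rule indep_vars_restrict[OF _ K disj])
  define A where "A j = {f \<in> space (PiM (K j) (\<lambda>_. borel)). P j f}" for j
  have eq: "(\<lambda>\<omega>. restrict (\<lambda>i. Y i \<omega>) (K j)) -` A j \<inter> space M
      = {\<omega>\<in>space M. P j (\<lambda>l\<in>K j. W (real (Suc l) * h) \<omega> - W (real l * h) \<omega>)}" for j
    by (auto simp: A_def Y_def space_PiM)
  have "prob (\<Inter>j\<in>J. (\<lambda>\<omega>. restrict (\<lambda>i. Y i \<omega>) (K j)) -` A j \<inter> space M)
       = (\<Prod>j\<in>J. prob ((\<lambda>\<omega>. restrict (\<lambda>i. Y i \<omega>) (K j)) -` A j \<inter> space M))"
    by (rule indep_varsD[OF indep J(2) J(1) order_refl]) (use P in \<open>auto simp: A_def\<close>)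
  then show ?thesis unfolding eq .
qed

lemma sum_restrict_increments:
  assumes "{a..<b} \<subseteq> K" "a \<le> b"
  shows "(\<Sum>l\<in>{a..<b}. (\<lambda>l\<in>K. W (real (Suc l) * h) \<omega> - W (real l * h) \<omega>) l)
    = W (real b * h) \<omega> - W (real a * h) \<omega>"
proof -
  have "(\<Sum>l\<in>{a..<b}. (\<lambda>l\<in>K. W (real (Suc l) * h) \<omega> - W (real l * h) \<omega>) l)
      = (\<Sum>l\<in>{a..<b}. W (real (Suc l) * h) \<omega> - W (real l * h) \<omega>)"
    using assms(1) by (intro sum.cong) auto
  also have "\<dots> = W (real b * h) \<omega> - W (real a * h) \<omega>"
    using sum_Suc_diff'[OF assms(2), of "\<lambda>l. W (real l * h) \<omega>"] by simp
  finally show ?thesis .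
qed

end

section \<open>An event on which the process stays inside\<close>

text \<open>The event on which \<open>x a + W\<close> stays inside \<open>(-(u+s+1)\<^sup>\<kappa>, (u+s+1)\<^sup>\<kappa>)\<close>, where
  \<open>a = (s+1)\<^sup>\<kappa>\<close>. On \<open>[0, T]\<close>, cut into \<open>n = 4^p\<close> blocks of length \<open>\<Delta>\<close>, every block moves
  \<open>W\<close> by \<open>d \<plusminus> e\<close> with \<open>d = -x a / n\<close>, so that \<open>x a + W\<close> is steered to within \<open>\<eta>/4\<close> of \<open>0\<close>
  at time \<open>T\<close>, and oscillates by at most \<open>\<eta>/4\<close> inside each block. Level \<open>m\<close> only looks at dyadic grids
  of mesh \<open>\<Delta>/2^m\<close>, so that it is determined by finitely many independent increments.\<close>

locale escape_construction = brownian_motion M W for M :: "'a measure" and W +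
  fixes \<kappa> s x a \<eta> T \<Delta> d e :: real and p :: nat
  assumes kappa: "1/2 < \<kappa>" and s_nonneg: "0 \<le> s" and x: "\<bar>x\<bar> < 1"
    and a_def: "a = (s + 1) powr \<kappa>" and eta_def: "\<eta> = (1 - \<bar>x\<bar>) * a / 2"
    and T: "1 \<le> T" and Delta_def: "\<Delta> = T / 4^p" and d_def: "d = - (x * a) / 4^p"
    and e_def: "e = \<eta> / (4 * 4^p)"
    and block_bound_pos:
      "0 < 2 * e * (1 / sqrt (2 * pi * \<Delta>) * exp (- ((\<bar>d\<bar> + e)^2) / (2 * \<Delta>))) - 150000 * \<Delta>^2 / (\<eta>/4)^4"
    and tail_bound: "\<And>m. (\<Sum>k\<le>m. 150000 * (2^(k+1) * T)^2 / ((1/2) * (2^k * T) powr \<kappa>)^4) \<le> 1/2"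
begin

abbreviation n :: nat where "n \<equiv> 4^p"

definition block_prob :: real where
  "block_prob =
    2 * e * (1 / sqrt (2 * pi * \<Delta>) * exp (- ((\<bar>d\<bar> + e)^2) / (2 * \<Delta>))) - 150000 * \<Delta>^2 / (\<eta>/4)^4"

definition block_event :: "nat \<Rightarrow> nat \<Rightarrow> 'a set" where
  "block_event m j = {\<omega>\<in>space M.
    (\<forall>i\<le>2^m. \<bar>W (real j * \<Delta> + real i * \<Delta> / 2^m) \<omega> - W (real j * \<Delta>) \<omega>\<bar> \<le> \<eta>/4)
    \<and> \<bar>W (real j * \<Delta> + \<Delta>) \<omega> - W (real j * \<Delta>) \<omega> - d\<bar> \<le> e}"

definition tail_event :: "nat \<Rightarrow> 'a set" where
  "tail_event m = {\<omega>\<in>space M. \<forall>k\<le>m. \<forall>i\<le>2^(m+k+1).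
    \<bar>W (T + real i * (2^(k+1) * T) / 2^(m+k+1)) \<omega> - W T \<omega>\<bar> \<le> (1/2) * (2^k * T) powr \<kappa>}"

definition escape_event :: "nat \<Rightarrow> 'a set" where
  "escape_event m = (\<Inter>j<n. block_event m j) \<inter> tail_event m"

lemma a_ge_1: "1 \<le> a"
  unfolding a_def using s_nonneg kappa by (intro ge_one_powr_ge_zero) auto

lemma eta_pos: "0 < \<eta>"
  unfolding eta_def using a_ge_1 x by simp

lemma eta_le: "\<eta> \<le> a / 2"
  unfolding eta_def using a_ge_1 x by (simp add: field_simps)

lemma Delta_pos: "0 < \<Delta>"
  unfolding Delta_def using T by simp

lemma e_pos: "0 < e"
  unfolding e_def using eta_pos by simp

lemma n_mult_e: "real n * e = \<eta> / 4"
  unfolding e_def by simp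

lemma n_mult_Delta: "real n * \<Delta> = T"
  unfolding Delta_def by simp

lemma events_block_event: "block_event m j \<in> events"
  unfolding block_event_def using Delta_pos by - measurable

lemma events_tail_event: "tail_event m \<in> events"
  unfolding tail_event_def using T by - measurable

lemma events_escape_event: "escape_event m \<in> events"
  unfolding escape_event_def using events_block_event events_tail_event
  by (intro sets.Int sets.finite_INT) (auto simp: lessThan_empty_iff)

lemma block_prob_pos: "0 < block_prob"
  unfolding block_prob_def by (rule block_bound_pos)

lemma prob_block_event_ge: "block_prob \<le> prob (block_event m j)"
  unfolding block_event_def block_prob_def using Delta_pos eta_pos e_pos
  by (intro prob_dyadic_block_ge) auto

lemma prob_tail_event_ge: "1/2 \<le> prob (tail_event m)"
proof -
  define B where "B k = {\<omega>\<in>space M. \<exists>i\<le>(2::nat)^(m+k+1).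
    (1/2) * (2^k * T) powr \<kappa> < \<bar>W (T + real i * (2^(k+1) * T) / 2^(m+k+1)) \<omega> - W T \<omega>\<bar>}" for k
  have B_events: "B k \<in> events" for k
    unfolding B_def using T by - measurable
  have "space M - tail_event m \<subseteq> (\<Union>k\<le>m. B k)"
  proof
    fix \<omega> assume "\<omega> \<in> space M - tail_event m"
    then obtain k i where "\<omega> \<in> space M" "k \<le> m" "i \<le> 2^(m+k+1)"
      and "\<not> \<bar>W (T + real i * (2^(k+1) * T) / 2^(m+k+1)) \<omega> - W T \<omega>\<bar> \<le> (1/2) * (2^k * T) powr \<kappa>"
      unfolding tail_event_def by blast
    then show "\<omega> \<in> (\<Union>k\<le>m. B k)" unfolding B_def not_le by blast
  qed
  then have "prob (space M - tail_event m) \<le> prob (\<Union>k\<le>m. B k)"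
    using B_events by (intro finite_measure_mono sets.finite_UN) auto
  also have "\<dots> \<le> (\<Sum>k\<le>m. prob (B k))"
    using B_events by (intro finite_measure_subadditive_finite) auto
  also have "\<dots> \<le> (\<Sum>k\<le>m. 150000 * (2^(k+1) * T)^2 / ((1/2) * (2^k * T) powr \<kappa>)^4)"
    unfolding B_def using T by (intro sum_mono prob_dyadic_max_increment_gt_le) auto
  also have "\<dots> \<le> 1/2" by (rule tail_bound)
  finally show ?thesis using prob_compl[OF events_tail_event[of m]] by simp
qed

lemma block_event_Suc_subset: "block_event (Suc m) j \<subseteq> block_event m j"
  unfolding block_event_def
  using dyadic_grid_Suc[where P="\<lambda>v. \<bar>W (real j * \<Delta> + v) _ - W (real j * \<Delta>) _\<bar> \<le> \<eta>/4" and r=m and L=\<Delta>]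
  by blast

lemma tail_event_Suc_subset: "tail_event (Suc m) \<subseteq> tail_event m"
proof -
  have "\<forall>i\<le>2^(m+k+1). \<bar>W (T + real i * (2^(k+1) * T) / 2^(m+k+1)) \<omega> - W T \<omega>\<bar> \<le> (1/2) * (2^k * T) powr \<kappa>"
    if "\<forall>i\<le>2^(Suc m+k+1). \<bar>W (T + real i * (2^(k+1) * T) / 2^(Suc m+k+1)) \<omega> - W T \<omega>\<bar> \<le> (1/2) * (2^k * T) powr \<kappa>"
    for k \<omega>
    using dyadic_grid_Suc[where P="\<lambda>v. \<bar>W (T + v) \<omega> - W T \<omega>\<bar> \<le> (1/2) * (2^k * T) powr \<kappa>"
        and r="m+k+1" and L="2^(k+1) * T"] that by simp
  then show ?thesis unfolding tail_event_def by (auto simp: le_Suc_eq)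
qed

lemma decseq_escape_event: "decseq escape_event"
  unfolding escape_event_def using block_event_Suc_subset tail_event_Suc_subset
  by (intro decseq_SucI) blast

definition mesh :: "nat \<Rightarrow> real" where "mesh m = \<Delta> / 2^m"

definition block_indices :: "nat \<Rightarrow> nat \<Rightarrow> nat set" where
  "block_indices m j =
    (if j < n then {j*2^m..<j*2^m + 2^m} else {n*2^m..<n*2^m + 2^(2*m+1)*n})"

definition grid_increments :: "nat \<Rightarrow> nat \<Rightarrow> 'a \<Rightarrow> nat \<Rightarrow> real" where
  "grid_increments m j \<omega> = (\<lambda>l\<in>block_indices m j. W (real (Suc l) * mesh m) \<omega> - W (real l * mesh m) \<omega>)"

definition block_pred :: "nat \<Rightarrow> nat \<Rightarrow> (nat \<Rightarrow> real) \<Rightarrow> bool" where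
  "block_pred m j f =
    (if j < n then (\<forall>i\<le>2^m. \<bar>\<Sum>l\<in>{j*2^m..<j*2^m + i}. f l\<bar> \<le> \<eta>/4) \<and> \<bar>(\<Sum>l\<in>{j*2^m..<j*2^m + 2^m}. f l) - d\<bar> \<le> e
     else (\<forall>k\<le>m. \<forall>i\<le>2^(m+k+1). \<bar>\<Sum>l\<in>{n*2^m..<n*2^m + i*n}. f l\<bar> \<le> (1/2) * (2^k * T) powr \<kappa>))"

lemma mesh_pos: "0 < mesh m"
  unfolding mesh_def using Delta_pos by simp

lemma mesh_block_point: "real (j*2^m + i) * mesh m = real j * \<Delta> + real i * \<Delta> / 2^m"
  by (simp add: mesh_def field_simps)

lemma mesh_block_start: "real (j*2^m) * mesh m = real j * \<Delta>"
  by (simp add: mesh_def field_simps)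

lemma mesh_block_end: "real (j*2^m + 2^m) * mesh m = real j * \<Delta> + \<Delta>"
  by (simp add: mesh_def field_simps)

lemma mesh_tail_start: "real (n*2^m) * mesh m = T"
  unfolding mesh_def by (simp add: Delta_def)

lemma mesh_tail_point: "real (n*2^m + i*n) * mesh m = T + real i * (2^(k+1) * T) / 2^(m+k+1)"
  unfolding mesh_def by (simp add: Delta_def power_add field_simps)

lemma sum_grid_increments:
  assumes "{i..<i'} \<subseteq> block_indices m j" "i \<le> i'"
  shows "(\<Sum>l\<in>{i..<i'}. grid_increments m j \<omega> l) = W (real i' * mesh m) \<omega> - W (real i * mesh m) \<omega>"
  unfolding grid_increments_def using assms by (rule sum_restrict_increments)

lemma block_event_as_pred:
  assumes j: "j < n"
  shows "{\<omega>\<in>space M. block_pred m j (grid_increments m j \<omega>)} = block_event m j"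
proof -
  have "(\<Sum>l\<in>{j*2^m..<j*2^m + i}. grid_increments m j \<omega> l)
      = W (real j * \<Delta> + real i * \<Delta> / 2^m) \<omega> - W (real j * \<Delta>) \<omega>" if "i \<le> 2^m" for i \<omega>
  proof -
    have "(\<Sum>l\<in>{j*2^m..<j*2^m + i}. grid_increments m j \<omega> l)
        = W (real (j*2^m + i) * mesh m) \<omega> - W (real (j*2^m) * mesh m) \<omega>"
      using j that by (intro sum_grid_increments) (auto simp: block_indices_def)
    then show ?thesis by (simp only: mesh_block_point mesh_block_start)
  qed
  moreover have "(\<Sum>l\<in>{j*2^m..<j*2^m + 2^m}. grid_increments m j \<omega> l)
      = W (real j * \<Delta> + \<Delta>) \<omega> - W (real j * \<Delta>) \<omega>" for \<omega>
  proof -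
    have "(\<Sum>l\<in>{j*2^m..<j*2^m + 2^m}. grid_increments m j \<omega> l)
        = W (real (j*2^m + 2^m) * mesh m) \<omega> - W (real (j*2^m) * mesh m) \<omega>"
      using j by (intro sum_grid_increments) (auto simp: block_indices_def)
    then show ?thesis by (simp only: mesh_block_end mesh_block_start)
  qed
  ultimately show ?thesis
    using j unfolding block_pred_def block_event_def by simp
qed

lemma tail_event_as_pred: "{\<omega>\<in>space M. block_pred m n (grid_increments m n \<omega>)} = tail_event m"
proof -
  have "(\<Sum>l\<in>{n*2^m..<n*2^m + i*n}. grid_increments m n \<omega> l)
      = W (T + real i * (2^(k+1) * T) / 2^(m+k+1)) \<omega> - W T \<omega>" if "k \<le> m" "i \<le> 2^(m+k+1)" for i k \<omega>
  proof -
    have "2^(m+k+1) \<le> (2::nat)^(2*m+1)" using that(1) by (intro power_increasing) auto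
    with that(2) have "i \<le> 2^(2*m+1)" by (rule order_trans)
    then have "i*n \<le> 2^(2*m+1)*n" by (rule mult_le_mono1)
    then have "(\<Sum>l\<in>{n*2^m..<n*2^m + i*n}. grid_increments m n \<omega> l)
        = W (real (n*2^m + i*n) * mesh m) \<omega> - W (real (n*2^m) * mesh m) \<omega>"
      by (intro sum_grid_increments) (auto simp: block_indices_def)
    then show ?thesis by (simp only: mesh_tail_point[of _ _ k] mesh_tail_start)
  qed
  then show ?thesis unfolding block_pred_def tail_event_def by simp
qed

lemma disjoint_block_indices: "disjoint_family_on (block_indices m) {..n}"
proof -
  have bounds: "j*2^m \<le> l \<and> (j < n \<longrightarrow> l < Suc j * 2^m)" if "l \<in> block_indices m j" "j \<le> n" for l j
  proof (cases "j < n")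
    case True
    then have "Suc j * 2^m \<le> n * 2^m" by (intro mult_le_mono1) simp
    then show ?thesis using that True by (auto simp: block_indices_def)
  qed (use that in \<open>auto simp: block_indices_def\<close>)
  have "block_indices m i \<inter> block_indices m j = {}" if "i < j" "j \<le> n" for i j
  proof -
    have "Suc i * 2^m \<le> j * 2^m" using that by (intro mult_le_mono1) simp
    then show ?thesis using bounds[of _ i] bounds[of _ j] that by fastforce
  qed
  then show ?thesis
    unfolding disjoint_family_on_def by (metis Int_commute atMost_iff linorder_neqE_nat)
qed

lemma sets_block_pred:
  "{f \<in> space (PiM (block_indices m j) (\<lambda>_. borel)). block_pred m j f} \<in> sets (PiM (block_indices m j) (\<lambda>_. borel))"
  unfolding block_pred_def by measurable

lemma prob_escape_event: "prob (escape_event m) = (\<Prod>j<n. prob (block_event m j)) * prob (tail_event m)"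
proof -
  let ?E = "\<lambda>j. {\<omega>\<in>space M. block_pred m j (grid_increments m j \<omega>)}"
  have E: "?E j = (if j < n then block_event m j else tail_event m)" if "j \<in> {..n}" for j
  proof (cases "j < n")
    case False
    with that have "j = n" by simp
    then show ?thesis by (simp add: tail_event_as_pred)
  qed (simp add: block_event_as_pred)
  have "prob (\<Inter>j\<in>{..n}. ?E j) = (\<Prod>j\<in>{..n}. prob (?E j))"
    unfolding grid_increments_def
  proof (rule indep_increment_blocks)
    show "block_indices m j \<subseteq> {..<n*2^m + 2^(2*m+1)*n}" if "j \<in> {..n}" for j
    proof -
      have "j * 2^m + 2^m \<le> n*2^m + 2^(2*m+1)*n" if "j < n"
        using that mult_le_mono1[of "Suc j" n "2^m"] by simp
      then show ?thesis by (auto simp: block_indices_def)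
    qed
  qed (use mesh_pos[of m] disjoint_block_indices sets_block_pred in auto)
  moreover have "(\<Inter>j\<in>{..n}. ?E j) = (\<Inter>j\<in>{..n}. if j < n then block_event m j else tail_event m)"
    using E by (rule INF_cong[OF refl])
  moreover have "\<dots> = escape_event m"
  proof -
    have "{..n} = insert n {..<n}" by auto
    then show ?thesis unfolding escape_event_def by auto
  qed
  moreover have "(\<Prod>j\<in>{..n}. prob (?E j)) = (\<Prod>j\<in>{..n}. prob (if j < n then block_event m j else tail_event m))"
    using E by (intro prod.cong refl arg_cong[where f=prob]) auto
  moreover have "\<dots> = (\<Prod>j<n. prob (block_event m j)) * prob (tail_event m)"
    by (simp add: lessThan_Suc_atMost[symmetric] prod.lessThan_Suc)
  ultimately show ?thesis by metis
qed

lemma prob_Inter_escape_event_pos: "0 < prob (\<Inter>m. escape_event m)"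
proof -
  have "block_prob^n * (1/2) \<le> prob (escape_event m)" for m
  proof -
    have "block_prob^n \<le> (\<Prod>j<n. prob (block_event m j))"
      using prod_mono[of "{..<n}" "\<lambda>_. block_prob"] block_prob_pos prob_block_event_ge by simp
    then show ?thesis
      unfolding prob_escape_event using prob_tail_event_ge[of m] block_prob_pos
      by (intro mult_mono prod_nonneg) auto
  qed
  moreover have "(\<lambda>m. prob (escape_event m)) \<longlonglongrightarrow> prob (\<Inter>m. escape_event m)"
    using events_escape_event decseq_escape_event by (intro finite_Lim_measure_decseq) auto
  ultimately have "block_prob^n * (1/2) \<le> prob (\<Inter>m. escape_event m)"
    by (intro LIMSEQ_le_const) auto
  moreover have "0 < block_prob^n * (1/2)" using block_prob_pos by simp
  ultimately show ?thesis by linarith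
qed

lemma block_endpoint_bound:
  assumes \<omega>: "\<omega> \<in> space M" and blocks: "\<And>j. j < n \<Longrightarrow> \<omega> \<in> block_event 0 j"
  shows "j \<le> n \<Longrightarrow> \<bar>W (real j * \<Delta>) \<omega> + x * a * real j / real n\<bar> \<le> real j * e"
proof (induction j)
  case 0
  then show ?case using W_0[OF \<omega>] by simp
next
  case (Suc j)
  let ?step = "W (real j * \<Delta> + \<Delta>) \<omega> - W (real j * \<Delta>) \<omega> - d"
  let ?prev = "W (real j * \<Delta>) \<omega> + x * a * real j / real n"
  have "W (real (Suc j) * \<Delta>) \<omega> + x * a * real (Suc j) / real n = ?step + ?prev"
    unfolding d_def by (simp add: field_simps)
  then have "\<bar>W (real (Suc j) * \<Delta>) \<omega> + x * a * real (Suc j) / real n\<bar> \<le> \<bar>?step\<bar> + \<bar>?prev\<bar>"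
    by (simp only: abs_triangle_ineq)
  also have "\<dots> \<le> e + real j * e"
  proof (rule add_mono)
    show "\<bar>?step\<bar> \<le> e" using blocks[of j] Suc.prems unfolding block_event_def by simp
    show "\<bar>?prev\<bar> \<le> real j * e" using Suc by simp
  qed
  finally show ?case by (simp add: field_simps)
qed

lemma block_start_bound:
  assumes \<omega>: "\<omega> \<in> space M" and blocks: "\<And>j. j < n \<Longrightarrow> \<omega> \<in> block_event 0 j" and j: "j \<le> n"
  shows "\<bar>x * a + W (real j * \<Delta>) \<omega>\<bar> \<le> \<bar>x\<bar> * a + \<eta>/4"
proof -
  have "\<bar>W (real j * \<Delta>) \<omega> + x * a * real j / real n\<bar> \<le> real j * e"
    using block_endpoint_bound[OF \<omega> blocks j] .
  also have "\<dots> \<le> real n * e" using j e_pos by (intro mult_right_mono) auto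
  also have "\<dots> = \<eta>/4" by (rule n_mult_e)
  finally have drift: "\<bar>W (real j * \<Delta>) \<omega> + x * a * real j / real n\<bar> \<le> \<eta>/4" .
  have "0 \<le> 1 - real j / real n" "1 - real j / real n \<le> 1" using j by (auto simp: field_simps)
  then have "\<bar>x * a * (1 - real j / real n)\<bar> \<le> \<bar>x\<bar> * a"
    using a_ge_1 by (simp add: abs_mult mult_left_le)
  moreover have "x * a + W (real j * \<Delta>) \<omega>
      = (W (real j * \<Delta>) \<omega> + x * a * real j / real n) + x * a * (1 - real j / real n)"
    by (simp add: field_simps)
  then have "\<bar>x * a + W (real j * \<Delta>) \<omega>\<bar>
      \<le> \<bar>W (real j * \<Delta>) \<omega> + x * a * real j / real n\<bar> + \<bar>x * a * (1 - real j / real n)\<bar>"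
    by (simp only: abs_triangle_ineq)
  ultimately have "\<bar>x * a + W (real j * \<Delta>) \<omega>\<bar> \<le> \<eta>/4 + \<bar>x\<bar> * a"
    using drift by (meson add_mono order_trans)
  then show ?thesis by simp
qed

lemma escape_grid_bound:
  assumes \<omega>: "\<omega> \<in> space M" and blocks: "\<And>m j. j < n \<Longrightarrow> \<omega> \<in> block_event m j"
    and r: "2*p \<le> r" and i: "i \<le> 2^r"
  shows "\<bar>x * a + W (real i * T / 2^r) \<omega>\<bar> \<le> \<bar>x\<bar> * a + \<eta>/2"
proof -
  text \<open>Level \<open>2p + m\<close> of the dyadic grid on \<open>[0, T]\<close> is level \<open>m\<close> inside each block.\<close>
  define m where "m = r - 2*p"
  have r_eq: "r = 2*p + m" using r by (simp add: m_def)
  have pw: "(2::real)^r = 4^p * 2^m" and pwn: "(2::nat)^r = n * 2^m"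
    unfolding r_eq by (simp_all add: power_add power_mult)
  define j where "j = i div 2^m"
  define i' where "i' = i mod 2^m"
  have ij: "i = j * 2^m + i'" using div_mult_mod_eq[of i "2^m"] by (simp add: j_def i'_def)
  have i': "i' < 2^m" by (simp add: i'_def)
  have pt: "real i * T / 2^r = real j * \<Delta> + real i' * \<Delta> / 2^m"
    unfolding Delta_def pw ij by (simp add: field_simps)
  show ?thesis
  proof (cases "j < n")
    case True
    then have "\<bar>W (real j * \<Delta> + real i' * \<Delta> / 2^m) \<omega> - W (real j * \<Delta>) \<omega>\<bar> \<le> \<eta>/4"
      using blocks[OF True, of m] i' unfolding block_event_def by auto
    moreover have "\<bar>x * a + W (real j * \<Delta>) \<omega>\<bar> \<le> \<bar>x\<bar> * a + \<eta>/4"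
      using True by (intro block_start_bound[OF \<omega> blocks]) auto
    ultimately show ?thesis unfolding pt by linarith
  next
    case False
    have "j * 2^m \<le> n * 2^m" using ij i pwn by linarith
    then have "j = n" using False by simp
    then have "i' = 0" using ij i pwn by simp
    then have "real i * T / 2^r = real n * \<Delta>" unfolding pt \<open>j = n\<close> by simp
    then show ?thesis using block_start_bound[OF \<omega> blocks, of n] eta_pos by simp
  qed
qed

lemma escape_initial_bound:
  assumes \<omega>: "\<omega> \<in> (\<Inter>m. escape_event m)" and u: "u \<in> {0..T}"
  shows "\<bar>x * a + W u \<omega>\<bar> \<le> \<bar>x\<bar> * a + \<eta>/2"
proof -
  have \<omega>_space: "\<omega> \<in> space M" and blocks: "\<And>m j. j < n \<Longrightarrow> \<omega> \<in> block_event m j"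
    using \<omega> by (auto simp: escape_event_def tail_event_def)
  define g where "g v = \<bar>x * a + W v \<omega>\<bar> - (\<bar>x\<bar> * a + \<eta>/2)" for v
  have "continuous_on {0..T} (\<lambda>v. W v \<omega>)"
    using continuous_on_W[OF \<omega>_space] by (rule continuous_on_subset) auto
  then have cont: "continuous_on {0..T} g" unfolding g_def by (intro continuous_intros)
  have "g u \<le> 0"
  proof (rule continuous_on_dyadic_nonpos[OF _ cont _ u, where level="2*p"])
    fix r i :: nat assume "2*p \<le> r" "i \<le> 2^r"
    then show "g (0 + real i * (T - 0) / 2^r) \<le> 0"
      using escape_grid_bound[OF \<omega>_space blocks] by (simp add: g_def)
  qed (use T in simp)
  then show ?thesis unfolding g_def by simp
qed

lemma escape_at_T:
  assumes \<omega>: "\<omega> \<in> (\<Inter>m. escape_event m)"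
  shows "\<bar>x * a + W T \<omega>\<bar> \<le> \<eta>/4"
proof -
  have \<omega>_space: "\<omega> \<in> space M" and blocks: "\<And>j. j < n \<Longrightarrow> \<omega> \<in> block_event 0 j"
    using \<omega> by (auto simp: escape_event_def tail_event_def)
  have "\<bar>W (real n * \<Delta>) \<omega> + x * a * real n / real n\<bar> \<le> real n * e"
    by (rule block_endpoint_bound[OF \<omega>_space blocks order_refl])
  then show ?thesis unfolding n_mult_Delta n_mult_e by (simp add: add.commute)
qed

lemma escape_tail_bound:
  assumes \<omega>: "\<omega> \<in> (\<Inter>m. escape_event m)" and u: "u \<in> {T..T + 2^(k+1) * T}"
  shows "\<bar>W u \<omega> - W T \<omega>\<bar> \<le> (1/2) * (2^k * T) powr \<kappa>"
proof -
  have \<omega>_space: "\<omega> \<in> space M" and tail: "\<And>m. \<omega> \<in> tail_event m"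
    using \<omega> by (auto simp: escape_event_def tail_event_def)
  define g where "g v = \<bar>W v \<omega> - W T \<omega>\<bar> - (1/2) * (2^k * T) powr \<kappa>" for v
  have "continuous_on {T..T + 2^(k+1) * T} (\<lambda>v. W v \<omega>)"
    using continuous_on_W[OF \<omega>_space] by (rule continuous_on_subset) (use T in auto)
  then have cont: "continuous_on {T..T + 2^(k+1) * T} g" unfolding g_def by (intro continuous_intros)
  have grid: "g (T + real i * ((T + 2^(k+1) * T) - T) / 2^r) \<le> 0" if r: "2*k+1 \<le> r" and i: "i \<le> 2^r" for r i
  proof -
    define m where "m = r - k - 1"
    have r_eq: "r = m + k + 1" and "k \<le> m" using r by (simp_all add: m_def)
    with i have "\<bar>W (T + real i * (2^(k+1) * T) / 2^(m+k+1)) \<omega> - W T \<omega>\<bar> \<le> (1/2) * (2^k * T) powr \<kappa>"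
      using tail[of m] unfolding tail_event_def by blast
    then show ?thesis unfolding g_def r_eq by simp
  qed
  have "g u \<le> 0"
    using continuous_on_dyadic_nonpos[of T "T + 2^(k+1) * T" g "2*k+1" u] T cont grid u by auto
  then show ?thesis unfolding g_def by simp
qed

lemma escape_no_hit:
  assumes \<omega>: "\<omega> \<in> (\<Inter>m. escape_event m)" and u: "0 \<le> u"
  shows "\<bar>x * a + W u \<omega>\<bar> < (u + s + 1) powr \<kappa>"
proof -
  have a_le: "a \<le> (u + s + 1) powr \<kappa>"
    unfolding a_def using u s_nonneg kappa by (intro powr_mono2) auto
  show ?thesis
  proof (cases "u \<le> T")
    case True
    then have "\<bar>x * a + W u \<omega>\<bar> \<le> \<bar>x\<bar> * a + \<eta>/2" using escape_initial_bound[OF \<omega>] u by auto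
    moreover have "\<bar>x\<bar> * a + \<eta>/2 < a" unfolding eta_def using x a_ge_1 by (simp add: field_simps)
    ultimately show ?thesis using a_le by linarith
  next
    case False
    then obtain k where k_upper: "u - T \<le> 2^(k+1) * T" and k_lower: "2^k * T \<le> u"
      using dyadic_window_exists[of T u] T by force
    have "\<bar>W u \<omega> - W T \<omega>\<bar> \<le> (1/2) * (2^k * T) powr \<kappa>"
      using escape_tail_bound[OF \<omega>, of u k] k_upper False by simp
    moreover have "(2^k * T) powr \<kappa> \<le> (u + s + 1) powr \<kappa>"
      using k_lower s_nonneg kappa T by (intro powr_mono2) auto
    moreover have "\<bar>x * a + W T \<omega>\<bar> \<le> \<eta>/4" using escape_at_T[OF \<omega>] .
    moreover have "\<eta>/4 < (1/2) * (u + s + 1) powr \<kappa>" using eta_le a_le a_ge_1 by linarith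
    ultimately show ?thesis by linarith
  qed
qed

lemma Inter_escape_event_no_hit:
  "(\<Inter>m. escape_event m) \<subseteq> {\<omega>\<in>space M. hit_time \<kappa> s x W \<omega> = \<infinity>}"
proof
  fix \<omega> assume \<omega>: "\<omega> \<in> (\<Inter>m. escape_event m)"
  have "\<bar>Xproc \<kappa> s x W t \<omega>\<bar> < 1" if t: "s \<le> t" for t
  proof -
    have "\<bar>x * a + W (t - s) \<omega>\<bar> < (t - s + s + 1) powr \<kappa>"
      using escape_no_hit[OF \<omega>, of "t - s"] t by simp
    moreover have "0 < (t + 1) powr \<kappa>" using t s_nonneg by simp
    ultimately show ?thesis unfolding Xproc_def a_def
      by (simp add: abs_div divide_less_eq mult.commute)
  qed
  then have "{t. t \<ge> s \<and> \<bar>Xproc \<kappa> s x W t \<omega>\<bar> = 1} = {}" by force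
  moreover have "\<omega> \<in> space M" using \<omega> by (auto simp: escape_event_def tail_event_def)
  ultimately show "\<omega> \<in> {\<omega>\<in>space M. hit_time \<kappa> s x W \<omega> = \<infinity>}"
    unfolding hit_time_def Let_def by simp
qed

end

section \<open>Choice of the parameters\<close>

lemma tail_term_eq:
  fixes T \<kappa> :: real
  assumes T: "0 < T"
  shows "150000 * (2^(k+1) * T)^2 / ((1/2) * (2^k * T) powr \<kappa>)^4
       = 9600000 * T powr (2 - 4*\<kappa>) * (4 / 2 powr (4*\<kappa>))^k"
proof -
  have p4: "((2^k * T) powr \<kappa>)^4 = (2 powr (4*\<kappa>))^k * T powr (4*\<kappa>)"
  proof -
    have "((2^k * T) powr \<kappa>)^4 = (2^k * T) powr (4*\<kappa>)"
      using powr_power[of "2^k * T" \<kappa> 4] T by simp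
    also have "\<dots> = (2 powr real k) powr (4*\<kappa>) * T powr (4*\<kappa>)"
      using T by (simp add: powr_mult powr_realpow)
    also have "(2 powr real k) powr (4*\<kappa>) = (2 powr (4*\<kappa>))^k"
      by (simp add: powr_powr powr_power mult.commute)
    finally show ?thesis .
  qed
  have sq: "(2^(k+1) * T)^2 = 4 * 4^k * T^2"
  proof -
    have "((2::real)^(k+1))^2 = (2^2)^(k+1)" by (metis power_mult mult.commute)
    then show ?thesis by (simp add: power_mult_distrib)
  qed
  have t2: "T powr (2 - 4*\<kappa>) = T^2 / T powr (4*\<kappa>)"
    using T by (simp add: powr_diff powr_numeral)
  have alg: "150000 * (4 * 4^k * T^2) / ((1/2)^4 * (P^k * Q)) = 9600000 * (T^2 / Q) * (4 / P)^k"
    if "0 < P" "0 < Q" for P Q :: real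
    using that T by (simp add: power_divide field_simps)
  show ?thesis
    unfolding sq unfolding power_mult_distrib p4 t2 by (rule alg) (use T in simp_all)
qed

text \<open>This is where \<open>\<kappa> > 1/2\<close> is needed: the tail terms decay geometrically with ratio
  \<open>4 / 2^(4\<kappa>) < 1\<close>, with a prefactor \<open>T^(2 - 4\<kappa>)\<close> that vanishes as \<open>T \<rightarrow> \<infinity>\<close>.\<close>

lemma exists_tail_scale:
  fixes \<kappa> :: real
  assumes \<kappa>: "1/2 < \<kappa>"
  shows "\<exists>T\<ge>1. \<forall>m. (\<Sum>k\<le>m. 150000 * (2^(k+1) * T)^2 / ((1/2) * (2^k * T) powr \<kappa>)^4) \<le> 1/2"
proof -
  define \<rho> where "\<rho> = 4 / 2 powr (4*\<kappa>)"
  have "(2::real) powr 2 < 2 powr (4*\<kappa>)" using \<kappa> by (intro powr_less_mono) auto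
  then have \<rho>: "0 < \<rho>" "\<rho> < 1" unfolding \<rho>_def by auto
  define \<epsilon> where "\<epsilon> = (1 - \<rho>) / 19200000"
  have "((\<lambda>T. T powr (2 - 4*\<kappa>)) \<longlongrightarrow> (0::real)) at_top"
    by (rule tendsto_neg_powr) (use \<kappa> in simp, rule filterlim_ident)
  then have "eventually (\<lambda>T. T powr (2 - 4*\<kappa>) < \<epsilon>) at_top"
    using \<rho> by (intro order_tendstoD) (auto simp: \<epsilon>_def)
  then obtain T0 where T0: "\<And>T. T0 \<le> T \<Longrightarrow> T powr (2 - 4*\<kappa>) < \<epsilon>"
    by (auto simp: eventually_at_top_linorder)
  define T where "T = max T0 1"
  have T: "1 \<le> T" "T powr (2 - 4*\<kappa>) < \<epsilon>" using T0[of T] by (auto simp: T_def)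
  have "(\<Sum>k\<le>m. 150000 * (2^(k+1) * T)^2 / ((1/2) * (2^k * T) powr \<kappa>)^4) \<le> 1/2" for m
  proof -
    have "(\<Sum>k\<le>m. 150000 * (2^(k+1) * T)^2 / ((1/2) * (2^k * T) powr \<kappa>)^4)
        = 9600000 * T powr (2 - 4*\<kappa>) * (\<Sum>k\<le>m. \<rho>^k)"
      unfolding \<rho>_def sum_distrib_left using T by (intro sum.cong refl tail_term_eq) auto
    also have "\<dots> \<le> 9600000 * \<epsilon> * (1 / (1 - \<rho>))"
      using T \<rho> sum_power_le_geometric[of \<rho> m]
      by (intro mult_mono) (auto simp: \<epsilon>_def intro!: sum_nonneg)
    also have "\<dots> = 1/2" unfolding \<epsilon>_def using \<rho> by simp
    finally show ?thesis .
  qed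
  then show ?thesis using T by blast
qed

lemma gauss_exponent_le:
  fixes q T a \<eta> x :: real
  assumes q: "1 \<le> q" and T: "1 \<le> T" and a: "1 \<le> a" and \<eta>: "0 < \<eta>" "\<eta> \<le> a" and x: "\<bar>x\<bar> < 1"
  shows "(\<bar>- (x * a) / q^2\<bar> + \<eta> / (4 * q^2))^2 / (2 * (T / q^2)) \<le> (a + \<eta>)^2"
proof -
  have "\<bar>- (x * a) / q^2\<bar> + \<eta> / (4 * q^2) = (\<bar>x\<bar> * a + \<eta>/4) / q^2"
    using q a by (simp add: abs_mult field_simps)
  then have "(\<bar>- (x * a) / q^2\<bar> + \<eta> / (4 * q^2))^2 / (2 * (T / q^2)) = (\<bar>x\<bar> * a + \<eta>/4)^2 / (2 * T * q^2)"
    using q T by (simp add: power_divide field_simps power2_eq_square)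
  also have "\<dots> \<le> (\<bar>x\<bar> * a + \<eta>/4)^2"
  proof -
    have "1 * 1 \<le> T * q^2" using T q by (intro mult_mono) (auto simp: one_le_power)
    then have "(\<bar>x\<bar> * a + \<eta>/4)^2 * 1 \<le> (\<bar>x\<bar> * a + \<eta>/4)^2 * (2 * T * q^2)"
      by (intro mult_left_mono) auto
    then show ?thesis using T q by (simp add: pos_divide_le_eq)
  qed
  also have "\<dots> \<le> (a + \<eta>)^2"
  proof (rule power_mono)
    have "\<bar>x\<bar> * a \<le> a" using x a by (simp add: mult_left_le_one_le)
    then show "\<bar>x\<bar> * a + \<eta>/4 \<le> a + \<eta>" using \<eta> by linarith
  qed (use \<eta> in simp)
  finally show ?thesis .
qed

lemma block_bound_rescale:
  fixes q T a \<eta> x :: real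
  assumes q: "1 \<le> q" and T: "1 \<le> T" and a: "1 \<le> a" and \<eta>: "0 < \<eta>" "\<eta> \<le> a" and x: "\<bar>x\<bar> < 1"
  shows "\<eta> * exp (- ((a + \<eta>)^2)) / (2 * sqrt (2*pi*T)) / q - 150000 * 256 * T^2 / \<eta>^4 / q^4
     \<le> 2 * (\<eta> / (4*q^2)) * (1 / sqrt (2*pi*(T/q^2)) * exp (- ((\<bar>- (x*a) / q^2\<bar> + \<eta> / (4*q^2))^2) / (2*(T/q^2))))
       - 150000 * (T/q^2)^2 / (\<eta>/4)^4"
proof -
  have sqrt_pos: "0 < sqrt (2*pi*T)" using T by simp
  have factor: "2 * (\<eta> / (4*q^2)) * (1 / sqrt (2*pi*(T/q^2))) = \<eta> / (2 * sqrt (2*pi*T)) / q"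
    using q sqrt_pos by (simp add: real_sqrt_divide field_simps power2_eq_square)
  have "exp (- ((a + \<eta>)^2)) \<le> exp (- ((\<bar>- (x*a) / q^2\<bar> + \<eta> / (4*q^2))^2) / (2*(T/q^2)))"
    using gauss_exponent_le[OF assms] by simp
  then have "\<eta> * exp (- ((a + \<eta>)^2)) / (2 * sqrt (2*pi*T)) / q
      \<le> \<eta> / (2 * sqrt (2*pi*T)) / q * exp (- ((\<bar>- (x*a) / q^2\<bar> + \<eta> / (4*q^2))^2) / (2*(T/q^2)))"
    using \<eta> q sqrt_pos mult_left_mono[of _ _ "\<eta> / (2 * sqrt (2*pi*T)) / q"] by simp
  also have "\<dots> = 2 * (\<eta> / (4*q^2)) * (1 / sqrt (2*pi*(T/q^2))
      * exp (- ((\<bar>- (x*a) / q^2\<bar> + \<eta> / (4*q^2))^2) / (2*(T/q^2))))"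
    unfolding factor[symmetric] by simp
  finally have "\<eta> * exp (- ((a + \<eta>)^2)) / (2 * sqrt (2*pi*T)) / q \<le> \<dots>" .
  moreover have "150000 * (T/q^2)^2 / (\<eta>/4)^4 = 150000 * 256 * T^2 / \<eta>^4 / q^4"
    using q \<eta> by (simp add: power_divide field_simps power2_eq_square power4_eq_xxxx)
  ultimately show ?thesis by linarith
qed

text \<open>The Gaussian lower bound for a block of length \<open>T/4^p\<close> decays like \<open>2^(-p)\<close>, the
  maximal-inequality correction like \<open>16^(-p)\<close>.\<close>

lemma exists_block_level:
  fixes T a \<eta> x :: real
  assumes T: "1 \<le> T" and a: "1 \<le> a" and \<eta>: "0 < \<eta>" "\<eta> \<le> a" and x: "\<bar>x\<bar> < 1"
  shows "\<exists>p::nat. 0 < 2 * (\<eta> / (4 * 4^p)) * (1 / sqrt (2 * pi * (T / 4^p))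
    * exp (- ((\<bar>- (x * a) / 4^p\<bar> + \<eta> / (4 * 4^p))^2) / (2 * (T / 4^p)))) - 150000 * (T / 4^p)^2 / (\<eta>/4)^4"
proof -
  define A where "A = \<eta> * exp (- ((a + \<eta>)^2)) / (2 * sqrt (2*pi*T))"
  define B where "B = 150000 * 256 * T^2 / \<eta>^4"
  have A: "0 < A" unfolding A_def using \<eta> T by simp
  obtain p :: nat where p: "B / A < 8^p" using real_arch_pow[of 8 "B / A"] by auto
  define q :: real where "q = 2^p"
  have q: "1 \<le> q" unfolding q_def by simp
  have "((2::real)^p)^2 = (2^2)^p" "((2::real)^p)^3 = (2^3)^p" by (metis power_mult mult.commute)+
  then have q4: "(4::real)^p = q^2" and q8: "(8::real)^p = q^3" unfolding q_def by simp_all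
  have "B < A * q^3" using p A q8 by (simp add: field_simps)
  then have "0 < A / q - B / q^4" using q by (simp add: field_simps power3_eq_cube power4_eq_xxxx)
  also have "A / q - B / q^4 \<le> 2 * (\<eta> / (4*q^2)) * (1 / sqrt (2*pi*(T/q^2))
      * exp (- ((\<bar>- (x*a) / q^2\<bar> + \<eta> / (4*q^2))^2) / (2*(T/q^2)))) - 150000 * (T/q^2)^2 / (\<eta>/4)^4"
    unfolding A_def B_def by (rule block_bound_rescale[OF q T a \<eta> x])
  finally show ?thesis unfolding q4[symmetric] by (intro exI[of _ p])
qed

section \<open>Hitting times\<close>

lemma ereal_eq_infinity_iff_less_nat: "(z::ereal) = \<infinity> \<longleftrightarrow> (\<forall>n::nat. ereal (real n) < z)"
proof
  assume less: "\<forall>n::nat. ereal (real n) < z"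
  show "z = \<infinity>"
  proof (cases z)
    case (real r)
    obtain n :: nat where "r < real n" using reals_Archimedean2 by blast
    with less[rule_format, of n] real show ?thesis by simp
  next
    case MInf
    with less show ?thesis by auto
  qed
qed simp

context brownian_motion
begin

lemma continuous_on_Xproc:
  assumes s: "0 \<le> s" and \<omega>: "\<omega> \<in> space M"
  shows "continuous_on {s..} (\<lambda>u. Xproc \<kappa> s x W u \<omega>)"
proof -
  have "continuous_on {s..} (\<lambda>u. W (u - s) \<omega>)"
    by (rule continuous_on_compose2[OF continuous_on_W[OF \<omega>]]) (auto intro: continuous_intros)
  moreover have "continuous_on {s..} (\<lambda>u. (u + 1) powr \<kappa>)"
    using s by (intro continuous_intros) auto
  ultimately show ?thesis unfolding Xproc_def using s by (intro continuous_intros) auto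
qed

text \<open>Since the path of \<open>X\<close> is continuous, the infimum in the definition of
  \<open>hit_time\<close> is attained.\<close>

lemma ereal_less_hit_time_iff:
  assumes s: "0 \<le> s" and \<omega>: "\<omega> \<in> space M"
  shows "ereal t < hit_time \<kappa> s x W \<omega> \<longleftrightarrow> (\<forall>u. s \<le> u \<and> u \<le> t \<longrightarrow> \<bar>Xproc \<kappa> s x W u \<omega>\<bar> \<noteq> 1)"
proof -
  define S where "S = {u. u \<ge> s \<and> \<bar>Xproc \<kappa> s x W u \<omega>\<bar> = 1}"
  have hit: "hit_time \<kappa> s x W \<omega> = (if S = {} then \<infinity> else ereal (Inf S))"
    unfolding hit_time_def S_def Let_def by simp
  have "S = {u \<in> {s..}. \<bar>Xproc \<kappa> s x W u \<omega>\<bar> = 1}" unfolding S_def by auto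
  also have "closed \<dots>"
    using continuous_on_Xproc[OF s \<omega>] by (intro continuous_closed_preimage_constant continuous_intros) auto
  finally have closed: "closed S" .
  have bdd: "bdd_below S" unfolding S_def by (intro bdd_belowI[of _ s]) auto
  show ?thesis
  proof (cases "S = {}")
    case True
    then show ?thesis unfolding hit S_def by auto
  next
    case False
    have "Inf S \<in> S" using closed_contains_Inf[OF False bdd closed] .
    moreover have "Inf S \<le> u" if "u \<in> S" for u using cInf_lower[OF that bdd] .
    ultimately show ?thesis using False unfolding hit S_def by force
  qed
qed

lemma no_hit_iff_dyadic:
  assumes s: "0 \<le> s" and st: "s \<le> t" and \<omega>: "\<omega> \<in> space M"
  shows "(\<forall>u. s \<le> u \<and> u \<le> t \<longrightarrow> \<bar>Xproc \<kappa> s x W u \<omega>\<bar> \<noteq> 1) \<longleftrightarrow>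
     (\<exists>k::nat. \<forall>r i::nat. i \<le> 2^r \<longrightarrow> 1 / (real k + 1) \<le> \<bar>\<bar>Xproc \<kappa> s x W (s + real i * (t - s) / 2^r) \<omega>\<bar> - 1\<bar>)"
proof -
  have "continuous_on {s..t} (\<lambda>u. Xproc \<kappa> s x W u \<omega>)"
    using continuous_on_Xproc[OF s \<omega>] by (rule continuous_on_subset) auto
  then have cont: "continuous_on {s..t} (\<lambda>u. \<bar>\<bar>Xproc \<kappa> s x W u \<omega>\<bar> - 1\<bar>)"
    by (intro continuous_intros)
  have "(\<forall>u. s \<le> u \<and> u \<le> t \<longrightarrow> \<bar>Xproc \<kappa> s x W u \<omega>\<bar> \<noteq> 1)
      \<longleftrightarrow> (\<forall>u\<in>{s..t}. 0 < \<bar>\<bar>Xproc \<kappa> s x W u \<omega>\<bar> - 1\<bar>)" by auto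
  also have "\<dots> \<longleftrightarrow> (\<exists>k::nat. \<forall>r i::nat. i \<le> 2^r \<longrightarrow>
      1 / (real k + 1) \<le> \<bar>\<bar>Xproc \<kappa> s x W (s + real i * (t - s) / 2^r) \<omega>\<bar> - 1\<bar>)"
    by (rule continuous_on_pos_iff_dyadic[OF st cont])
  finally show ?thesis .
qed

lemma borel_measurable_Xproc:
  assumes "s \<le> u"
  shows "(\<lambda>p. Xproc \<kappa> s (fst p) W u (snd p)) \<in> borel_measurable (borel \<Otimes>\<^sub>M M)"
proof -
  have [measurable]: "W (u - s) \<in> borel_measurable M" using assms by (intro borel_measurable_W) simp
  show ?thesis unfolding Xproc_def by measurable
qed

lemma sets_no_hit:
  assumes s: "0 \<le> s"
  shows "{p \<in> space (borel \<Otimes>\<^sub>M M). \<forall>u. s \<le> u \<and> u \<le> t \<longrightarrow> \<bar>Xproc \<kappa> s (fst p) W u (snd p)\<bar> \<noteq> 1}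
    \<in> sets (borel \<Otimes>\<^sub>M M)"
proof (cases "s \<le> t")
  case False
  then have "{p \<in> space (borel \<Otimes>\<^sub>M M). \<forall>u. s \<le> u \<and> u \<le> t \<longrightarrow> \<bar>Xproc \<kappa> s (fst p) W u (snd p)\<bar> \<noteq> 1}
    = space (borel \<Otimes>\<^sub>M M)" by auto
  then show ?thesis by simp
next
  case True
  have [measurable]: "(\<lambda>p. Xproc \<kappa> s (fst p) W (s + real i * (t - s) / 2^r) (snd p)) \<in> borel_measurable (borel \<Otimes>\<^sub>M M)"
    for i r :: nat
    using True by (intro borel_measurable_Xproc) simp
  have "{p \<in> space (borel \<Otimes>\<^sub>M M). \<forall>u. s \<le> u \<and> u \<le> t \<longrightarrow> \<bar>Xproc \<kappa> s (fst p) W u (snd p)\<bar> \<noteq> 1}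
    = {p \<in> space (borel \<Otimes>\<^sub>M M). \<exists>k::nat. \<forall>r i::nat. i \<le> 2^r \<longrightarrow>
         1 / (real k + 1) \<le> \<bar>\<bar>Xproc \<kappa> s (fst p) W (s + real i * (t - s) / 2^r) (snd p)\<bar> - 1\<bar>}"
  proof (rule Collect_cong, rule conj_cong[OF refl])
    fix p :: "real \<times> 'a" assume "p \<in> space (borel \<Otimes>\<^sub>M M)"
    then have "snd p \<in> space M" by (auto simp: space_pair_measure)
    then show "(\<forall>u. s \<le> u \<and> u \<le> t \<longrightarrow> \<bar>Xproc \<kappa> s (fst p) W u (snd p)\<bar> \<noteq> 1) \<longleftrightarrow>
        (\<exists>k::nat. \<forall>r i::nat. i \<le> 2^r \<longrightarrow>
           1 / (real k + 1) \<le> \<bar>\<bar>Xproc \<kappa> s (fst p) W (s + real i * (t - s) / 2^r) (snd p)\<bar> - 1\<bar>)"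
      by (rule no_hit_iff_dyadic[OF s True])
  qed
  also have "\<dots> \<in> sets (borel \<Otimes>\<^sub>M M)" by measurable
  finally show ?thesis .
qed

lemma hit_time_gt_eq_Pair_vimage:
  assumes "0 \<le> s"
  shows "{\<omega>\<in>space M. ereal t < hit_time \<kappa> s x W \<omega>}
    = Pair x -` {p \<in> space (borel \<Otimes>\<^sub>M M). \<forall>u. s \<le> u \<and> u \<le> t \<longrightarrow> \<bar>Xproc \<kappa> s (fst p) W u (snd p)\<bar> \<noteq> 1}"
  using ereal_less_hit_time_iff[OF assms] by (auto simp: space_pair_measure)

lemma events_hit_time_gt:
  assumes "0 \<le> s"
  shows "{\<omega>\<in>space M. ereal t < hit_time \<kappa> s x W \<omega>} \<in> events"
  unfolding hit_time_gt_eq_Pair_vimage[OF assms] by (rule sets_Pair1[OF sets_no_hit[OF assms]])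

lemma borel_measurable_prob_hit_time_gt:
  assumes "0 \<le> s"
  shows "(\<lambda>x. prob {\<omega>\<in>space M. ereal t < hit_time \<kappa> s x W \<omega>}) \<in> borel_measurable borel"
proof -
  note measurable_emeasure_Pair[OF sets_no_hit[OF assms], measurable]
  show ?thesis unfolding hit_time_gt_eq_Pair_vimage[OF assms] measure_def by measurable
qed

lemma hit_time_infinity_eq_Inter:
  "{\<omega>\<in>space M. hit_time \<kappa> s x W \<omega> = \<infinity>} = (\<Inter>n. {\<omega>\<in>space M. ereal (real n) < hit_time \<kappa> s x W \<omega>})"
  using ereal_eq_infinity_iff_less_nat by auto

lemma events_hit_time_infinity:
  assumes "0 \<le> s"
  shows "{\<omega>\<in>space M. hit_time \<kappa> s x W \<omega> = \<infinity>} \<in> events"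
  unfolding hit_time_infinity_eq_Inter using events_hit_time_gt[OF assms] by (intro sets.countable_INT) auto

lemma tendsto_prob_hit_time_gt:
  assumes s: "0 \<le> s"
  shows "((\<lambda>t. prob {\<omega>\<in>space M. ereal t < hit_time \<kappa> s x W \<omega>})
    \<longlongrightarrow> prob {\<omega>\<in>space M. hit_time \<kappa> s x W \<omega> = \<infinity>}) at_top"
proof -
  let ?P = "\<lambda>t. prob {\<omega>\<in>space M. ereal t < hit_time \<kappa> s x W \<omega>}"
  have antimono: "?P t' \<le> ?P t" if "t \<le> t'" for t t'
    using that events_hit_time_gt[OF s]
    by (intro finite_measure_mono) (auto intro: order.strict_trans1[rotated])
  have "(\<lambda>n. ?P (real n)) \<longlonglongrightarrow> prob {\<omega>\<in>space M. hit_time \<kappa> s x W \<omega> = \<infinity>}"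
    unfolding hit_time_infinity_eq_Inter using events_hit_time_gt[OF s]
    by (intro finite_Lim_measure_decseq decseq_SucI) (auto intro: order.strict_trans1[rotated])
  then have "((\<lambda>t. - ?P t) \<longlongrightarrow> - prob {\<omega>\<in>space M. hit_time \<kappa> s x W \<omega> = \<infinity>}) at_top"
    using antimono by (intro tendsto_at_topI_sequentially_real monoI tendsto_minus) auto
  then show ?thesis by (rule tendsto_minus_cancel)
qed

lemma borel_measurable_prob_hit_time_infinity:
  assumes "0 \<le> s"
  shows "(\<lambda>x. prob {\<omega>\<in>space M. hit_time \<kappa> s x W \<omega> = \<infinity>}) \<in> borel_measurable borel"
proof (rule borel_measurable_LIMSEQ_real)
  show "(\<lambda>n. prob {\<omega>\<in>space M. ereal (real n) < hit_time \<kappa> s x W \<omega>})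
      \<longlonglongrightarrow> prob {\<omega>\<in>space M. hit_time \<kappa> s x W \<omega> = \<infinity>}" for x
    using tendsto_prob_hit_time_gt[OF assms] filterlim_real_sequentially by (rule filterlim_compose)
qed (rule borel_measurable_prob_hit_time_gt[OF assms])

lemma prob_hit_time_infinity_pos:
  assumes \<kappa>: "1/2 < \<kappa>" and s: "0 \<le> s" and x: "\<bar>x\<bar> < 1"
  shows "0 < prob {\<omega>\<in>space M. hit_time \<kappa> s x W \<omega> = \<infinity>}"
proof -
  define a where "a = (s + 1) powr \<kappa>"
  define \<eta> where "\<eta> = (1 - \<bar>x\<bar>) * a / 2"
  have a: "1 \<le> a" unfolding a_def using s \<kappa> by (intro ge_one_powr_ge_zero) auto
  have \<eta>: "0 < \<eta>" "\<eta> \<le> a" unfolding \<eta>_def using a x by (auto simp: field_simps)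
  obtain T where T: "1 \<le> T"
    and tail: "\<And>m. (\<Sum>k\<le>m. 150000 * (2^(k+1) * T)^2 / ((1/2) * (2^k * T) powr \<kappa>)^4) \<le> 1/2"
    using exists_tail_scale[OF \<kappa>] by blast
  obtain p :: nat where block: "0 < 2 * (\<eta> / (4 * 4^p)) * (1 / sqrt (2 * pi * (T / 4^p))
    * exp (- ((\<bar>- (x * a) / 4^p\<bar> + \<eta> / (4 * 4^p))^2) / (2 * (T / 4^p)))) - 150000 * (T / 4^p)^2 / (\<eta>/4)^4"
    using exists_block_level[OF T a \<eta> x] by blast
  interpret escape_construction M W \<kappa> s x a \<eta> T "T / 4^p" "- (x * a) / 4^p" "\<eta> / (4 * 4^p)" p
    using \<kappa> s x T tail block by unfold_locales (auto simp: a_def \<eta>_def)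
  have "prob (\<Inter>m. escape_event m) \<le> prob {\<omega>\<in>space M. hit_time \<kappa> s x W \<omega> = \<infinity>}"
    by (rule finite_measure_mono[OF Inter_escape_event_no_hit events_hit_time_infinity[OF s]])
  with prob_Inter_escape_event_pos show ?thesis by linarith
qed

lemma tendsto_integral_prob_hit_time_gt:
  assumes s: "0 \<le> s" and \<mu>: "prob_space \<mu>" "sets \<mu> = sets borel"
  shows "((\<lambda>t. \<integral>x. prob {\<omega>\<in>space M. ereal t < hit_time \<kappa> s x W \<omega>} \<partial>\<mu>)
    \<longlongrightarrow> (\<integral>x. prob {\<omega>\<in>space M. hit_time \<kappa> s x W \<omega> = \<infinity>} \<partial>\<mu>)) at_top"
proof (rule integral_dominated_convergence_at_top[where w="\<lambda>_. 1"])
  show "(\<lambda>x. prob {\<omega>\<in>space M. hit_time \<kappa> s x W \<omega> = \<infinity>}) \<in> borel_measurable \<mu>"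
    unfolding measurable_cong_sets[OF \<mu>(2) refl] using s by (rule borel_measurable_prob_hit_time_infinity)
  show "(\<lambda>x. prob {\<omega>\<in>space M. ereal t < hit_time \<kappa> s x W \<omega>}) \<in> borel_measurable \<mu>" for t
    unfolding measurable_cong_sets[OF \<mu>(2) refl] using s by (rule borel_measurable_prob_hit_time_gt)
  show "integrable \<mu> (\<lambda>_. 1::real)"
    using \<mu>(1) by (simp add: prob_space.finite_measure finite_measure.integrable_const)
  show "AE x in \<mu>. ((\<lambda>t. prob {\<omega>\<in>space M. ereal t < hit_time \<kappa> s x W \<omega>})
      \<longlongrightarrow> prob {\<omega>\<in>space M. hit_time \<kappa> s x W \<omega> = \<infinity>}) at_top"
    using tendsto_prob_hit_time_gt[OF s] by simp
qed simp

lemma integral_prob_hit_time_infinity_pos: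
  assumes \<kappa>: "1/2 < \<kappa>" and s: "0 \<le> s" and \<mu>: "prob_space \<mu>" "sets \<mu> = sets borel"
    and supp: "AE x in \<mu>. \<bar>x\<bar> < 1"
  shows "0 < (\<integral>x. prob {\<omega>\<in>space M. hit_time \<kappa> s x W \<omega> = \<infinity>} \<partial>\<mu>)"
proof -
  interpret \<mu>: prob_space \<mu> by (rule \<mu>(1))
  have meas: "(\<lambda>x. prob {\<omega>\<in>space M. hit_time \<kappa> s x W \<omega> = \<infinity>}) \<in> borel_measurable \<mu>"
    unfolding measurable_cong_sets[OF \<mu>(2) refl] using s by (rule borel_measurable_prob_hit_time_infinity)
  from supp have "AE x in \<mu>. 0 < prob {\<omega>\<in>space M. hit_time \<kappa> s x W \<omega> = \<infinity>}"
    by (rule eventually_mono) (rule prob_hit_time_infinity_pos[OF \<kappa> s])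
  moreover have "integrable \<mu> (\<lambda>x. prob {\<omega>\<in>space M. hit_time \<kappa> s x W \<omega> = \<infinity>})"
    using meas by (intro \<mu>.integrable_const_bound[where B=1]) auto
  ultimately show ?thesis
    using \<mu>.integral_less_AE_space[of "\<lambda>_. 0"] \<mu>.emeasure_space_1 by simp
qed

end

theorem lemma1:
  fixes \<kappa> s :: real and \<mu> :: "real measure" and M :: "'a measure"
    and W :: "real \<Rightarrow> 'a \<Rightarrow> real"
  assumes "\<kappa> > 1/2"
    and "std_BM M W"
    and "s \<ge> 0"
    and "prob_space \<mu>" and "sets \<mu> = sets borel" and "emeasure \<mu> {-1<..<1} = 1"
  shows "((\<lambda>t. Pmix M \<mu> (\<lambda>x \<omega>. hit_time \<kappa> s x W \<omega> > ereal t))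
            \<longlongrightarrow> Pmix M \<mu> (\<lambda>x \<omega>. hit_time \<kappa> s x W \<omega> = \<infinity>)) at_top
         \<and> Pmix M \<mu> (\<lambda>x \<omega>. hit_time \<kappa> s x W \<omega> = \<infinity>) > 0"
proof -
  interpret brownian_motion M W by unfold_locales (rule assms(2))
  interpret \<mu>: prob_space \<mu> by (rule assms(4))
  have "AE x in \<mu>. x \<in> {-1<..<1}"
    using assms(6) by (intro \<mu>.AE_prob_1) (simp add: \<mu>.emeasure_eq_measure)
  then have "AE x in \<mu>. \<bar>x\<bar> < 1" by (rule eventually_mono) auto
  then show ?thesis
    using tendsto_integral_prob_hit_time_gt[OF assms(3-5)]
      integral_prob_hit_time_infinity_pos[OF assms(1,3-5)]
    by (simp add: Pmix_def)
qed

end
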